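(* Let $a,b,c$ be distinct primes with $a<b$ and $N(a,b,c)>1$, with $(a,b,c)\notin\{(2,3,5),(2,3,11),(2,5,3),(2,7,3),(3,5,2),(3,13,2)\}$, and let the two solutions of $a^x+b^y=c^z$ be $(x_1,y_1,z_1)$, $(x_2,y_2,z_2)$ with $2\mid x_1$, $2\mid y_1$, $z_1=1$, $2\nmid y_2$. Suppose $b\equiv 13\pmod{24}$. If $c\equiv 5\pmod{24}$, then $x_1=2$. If $c\equiv 17\pmod{24}$, then $x_2=2$, so that $4+b^{y_2}=c^{z_2}$, with $y_2$ odd, $y_2>1$, $z_2$ odd and $z_2>1$.
   Context: $N(a,b,c)$ denotes the number of triples $(x,y,z)$ of positive integers with $a^x+b^y=c^z$. *)

theory Defs
  imports Main "HOL-Computational_Algebra.Primes"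
begin

definition sols :: "nat \<Rightarrow> nat \<Rightarrow> nat \<Rightarrow> (nat \<times> nat \<times> nat) set" where
  "sols a b c = {(x, y, z). x > 0 \<and> y > 0 \<and> z > 0 \<and> a ^ x + b ^ y = c ^ z}"

definition N :: "nat \<Rightarrow> nat \<Rightarrow> nat \<Rightarrow> nat" where
  "N a b c = card (sols a b c)"

end

theory Submission
  imports Defs "HOL-Number_Theory.Number_Theory"
begin

text \<open>
  Since c is odd, a = 2. Modulo 8, b^y is 1 for even y and 5 for odd y, which forces
  2^x \<equiv> 4 (mod 8), i.e. x = 2, in the relevant solution; modulo 3, 4 + b^y2 \<equiv> 2 forces z2 odd;
  and y2 = 1 is impossible because c^z2 \<ge> c > b^2.

  The real work is z2 > 1. If z2 = 1 then 2^x1 + b^y1 = 4 + b^y2 with x1 \<ge> 4, i.e.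
  b^y1 (b^d - 1) = 4 (u - 1)(u + 1) where 2^x1 = 4u^2 and d = y2 - y1 is odd. The prime b divides
  one of u \<plusminus> 1, so the other factor m is odd, m \<equiv> \<plusminus>2 (mod b) and b^d \<equiv> 1 (mod m).
  As d is odd, b is a square modulo every prime p dividing m, so by quadratic reciprocity
  (b \<equiv> 1 mod 4) the Jacobi symbol (m/b) is 1. But (\<plusminus>2/b) = -1 since b \<equiv> 5 (mod 8).
\<close>

lemma even_power_cong_1:
  fixes b m y :: nat
  assumes "[b ^ 2 = 1] (mod m)" and "even y"
  shows "[b ^ y = 1] (mod m)"
proof -
  obtain k where "y = 2 * k" using \<open>even y\<close> by (rule evenE)
  then show ?thesis using cong_pow[OF assms(1), of k] by (simp add: power_mult)
qed

lemma odd_power_cong_self: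
  fixes b m y :: nat
  assumes "[b ^ 2 = 1] (mod m)" and "odd y"
  shows "[b ^ y = b] (mod m)"
proof -
  obtain k where "y = 2 * k + 1" using \<open>odd y\<close> by (rule oddE)
  then show ?thesis
    using cong_scalar_right[OF even_power_cong_1[OF assms(1)], of "2 * k" b]
    by (simp add: mult.commute)
qed

lemma two_power_mod_8: "(2::nat) ^ x mod 8 = (if x < 3 then 2 ^ x else 0)"
proof (cases "x < 3")
  case False
  then have "(2::nat) ^ x = 2 ^ 3 * 2 ^ (x - 3)"
    by (metis power_add le_add_diff_inverse not_less)
  with False show ?thesis by simp
qed (auto simp: less_Suc_eq numeral_3_eq_3)

lemma square_cong_if_odd_power_cong_1:
  fixes b m d :: nat
  assumes "[b ^ d = 1] (mod m)" and "odd d"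
  shows "[(b ^ ((d + 1) div 2)) ^ 2 = b] (mod m)"
proof -
  have "2 * ((d + 1) div 2) = Suc d" using \<open>odd d\<close> by simp
  then have "(b ^ ((d + 1) div 2)) ^ 2 = b ^ d * b" by (metis power_mult mult.commute power_Suc2)
  then show ?thesis using cong_scalar_right[OF assms(1), of b] by simp
qed

lemma euler_power_cong_1_if_QuadRes:
  fixes p b :: nat
  assumes "prime p" "2 < p" "prime b" "b mod 4 = 1" "p \<noteq> b"
    and "QuadRes (int p) (int b)"
  shows "[p ^ ((b - 1) div 2) = 1] (mod b)"
proof -
  have "2 < b" using assms(3,4) prime_ge_2_nat[of b] by presburger
  have "\<not> [int b = 0] (mod int p)"
    using primes_dvd_imp_eq[OF assms(1,3)] assms(5) by (auto simp: cong_0_iff)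
  then have "Legendre (int b) (int p) = 1"
    using assms(6) by (simp add: Legendre_def)
  moreover have "even ((b - 1) div 2)"
    using assms(4) by presburger
  ultimately have "Legendre (int p) (int b) = 1"
    using Quadratic_Reciprocity[OF assms(1,2,3) \<open>2 < b\<close> assms(5)] by simp
  then have "[1 = int p ^ ((b - 1) div 2)] (mod int b)"
    using euler_criterion[OF assms(3) \<open>2 < b\<close>, of "int p"] by simp
  then show ?thesis by (metis cong_int_iff cong_sym of_nat_1 of_nat_power)
qed

lemma euler_power_cong_1_if_odd_power_cong_1:
  fixes b d m :: nat
  assumes "prime b" "b mod 4 = 1" "odd d"
    and "odd m" "coprime m b" "[b ^ d = 1] (mod m)"
  shows "[m ^ ((b - 1) div 2) = 1] (mod b)"
  using assms(4-6)
proof (induction m rule: prime_divisors_induct)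
  case (factor p x)
  have "odd p" "odd x" using factor.prems(1) by simp_all
  then have "2 < p" using prime_ge_2_nat[OF factor.hyps(1)] by presburger
  have "p \<noteq> b" using factor.prems(2) factor.hyps(1) by auto
  have "[b ^ d = 1] (mod p)" "[b ^ d = 1] (mod x)"
    using factor.prems(3) by (auto elim: cong_dvd_modulus_nat)
  then have "[int ((b ^ ((d + 1) div 2)) ^ 2) = int b] (mod int p)"
    using square_cong_if_odd_power_cong_1 assms(3) cong_int_iff by blast
  then have "QuadRes (int p) (int b)" unfolding QuadRes_def by (metis of_nat_power)
  then have "[p ^ ((b - 1) div 2) = 1] (mod b)"
    using euler_power_cong_1_if_QuadRes \<open>2 < p\<close> \<open>p \<noteq> b\<close> factor.hyps(1) assms(1,2) by blast
  moreover have "[x ^ ((b - 1) div 2) = 1] (mod b)"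
    using factor.IH \<open>odd x\<close> \<open>[b ^ d = 1] (mod x)\<close> factor.prems(2) by simp
  ultimately show ?case using cong_mult by (fastforce simp: power_mult_distrib)
qed auto

lemma two_euler_power_cong_minus_1:
  fixes b :: nat
  assumes "prime b" and "b mod 8 = 5"
  shows "[2 ^ ((b - 1) div 2) = -1] (mod int b)"
proof -
  obtain k where b: "b = 8 * k + 5" using assms(2) by (metis mod_div_mult_eq add.commute mult.commute)
  then have "2 < b" by simp
  interpret G: GAUSS b 2
  proof
    show "\<not> [2 = 0] (mod int b)"
      using \<open>2 < b\<close> zdvd_imp_le[of "int b" 2] by (auto simp: cong_0_iff)
  qed (use assms(1) \<open>2 < b\<close> in simp_all)
  have half: "(int b - 1) div 2 = 4 * int k + 2" using b by simp
  \<comment> \<open>Gauss's lemma: exactly 2k + 1 of 2, 4, \<dots>, b - 1 exceed b/2.\<close>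
  have "G.C = (\<lambda>x. x * 2) ` {0<..4 * int k + 2}"
  proof -
    have "G.C = (\<lambda>x. x mod int b) ` ((\<lambda>x. x * 2) ` {0<..4 * int k + 2})"
      unfolding G.C_def G.B_def G.A_def half by simp
    also have "\<dots> = (\<lambda>x. x * 2) ` {0<..4 * int k + 2}"
      unfolding image_image by (rule image_cong) (auto simp: b)
    finally show ?thesis .
  qed
  then have "G.E = (\<lambda>x. x * 2) ` {2 * int k + 2..4 * int k + 2}"
    unfolding G.E_def half by (auto simp: image_iff)
  then have "card G.E = 2 * k + 1"
    by (simp add: card_image inj_on_def)
  then have "Legendre 2 (int b) = -1"
    using G.gauss_lemma by simp
  then show ?thesis
    using euler_criterion[OF assms(1) \<open>2 < b\<close>, of 2] by (simp add: cong_sym)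
qed

lemma coprime_if_square_cong_4:
  fixes b m :: nat
  assumes "prime b" "b \<noteq> 2" "[m ^ 2 = 4] (mod b)"
  shows "coprime m b"
proof (rule ccontr)
  assume "\<not> coprime m b"
  then have "b dvd m" using assms(1) prime_imp_coprime coprime_commute by blast
  then have "b dvd m ^ 2" by (simp add: power2_eq_square)
  then have "b dvd 2 ^ 2" using assms(3) by (simp add: cong_dvd_iff)
  then have "b dvd 2" using assms(1) prime_dvd_power by blast
  then show False using assms(1,2) primes_dvd_imp_eq two_is_prime_nat by blast
qed

lemma not_square_cong_4_if_odd_power_cong_1:
  fixes b d m :: nat
  assumes "prime b" "b mod 8 = 5" "odd d" "odd m" "[b ^ d = 1] (mod m)"
  shows "\<not> [m ^ 2 = 4] (mod b)"
proof
  assume m: "[m ^ 2 = 4] (mod b)"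
  have "coprime m b" using coprime_if_square_cong_4[OF assms(1) _ m] assms(2) by auto
  define e where "e = (b - 1) div 4"
  have half: "(b - 1) div 2 = 2 * e" unfolding e_def using assms(2) by presburger
  have "b mod 4 = 1" using assms(2) by presburger
  then have "[m ^ ((b - 1) div 2) = 1] (mod b)"
    using euler_power_cong_1_if_odd_power_cong_1 assms \<open>coprime m b\<close> by blast
  moreover have "[m ^ ((b - 1) div 2) = 2 ^ ((b - 1) div 2)] (mod b)"
    using cong_pow[OF m, of e] unfolding half by (simp add: power_mult)
  ultimately have "[int 2 ^ ((b - 1) div 2) = 1] (mod int b)"
    by (metis cong_int_iff cong_sym cong_trans of_nat_1 of_nat_power)
  then have "[1 = -1] (mod int b)"
    using two_euler_power_cong_minus_1[OF assms(1,2)] by (metis cong_sym cong_trans of_nat_numeral)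
  then have "int b dvd 2" by (simp add: cong_iff_dvd_diff)
  then show False using assms(2) zdvd_imp_le[of "int b" 2] by simp
qed

lemma power_times_pred_ne_four_times_square_pred:
  fixes b d u y :: nat
  assumes "prime b" "b mod 8 = 5" "odd d" "even u" "0 < u" "0 < y"
  shows "int b ^ y * (int b ^ d - 1) \<noteq> 4 * ((int u - 1) * (int u + 1))"
proof
  assume key: "int b ^ y * (int b ^ d - 1) = 4 * ((int u - 1) * (int u + 1))"
  have "prime (int b)" using assms(1) by simp
  have "int b dvd int b ^ y * (int b ^ d - 1)"
    using assms(6) by simp
  then have "int b dvd 4 * ((int u - 1) * (int u + 1))"
    unfolding key .
  moreover have "\<not> int b dvd 4"
    using assms(2) zdvd_imp_le[of "int b" 4] by auto
  ultimately have "int b dvd int u - 1 \<or> int b dvd int u + 1"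
    using \<open>prime (int b)\<close> by (simp add: prime_dvd_mult_iff)
  then obtain m where m: "m = u - 1 \<or> m = u + 1" and "int b dvd (int m - 2) * (int m + 2)"
  proof
    assume "int b dvd int u - 1"
    then have "int b dvd (int (u + 1) - 2) * (int (u + 1) + 2)" by simp
    then show ?thesis using that[of "u + 1"] by simp
  next
    assume "int b dvd int u + 1"
    moreover have "int (u - 1) + 2 = int u + 1" using assms(5) by simp
    ultimately have "int b dvd (int (u - 1) - 2) * (int (u - 1) + 2)" by (metis dvd_mult)
    then show ?thesis using that[of "u - 1"] by simp
  qed
  then have "[m ^ 2 = 4] (mod b)"
    by (simp add: cong_int_iff[symmetric] cong_iff_dvd_diff power2_eq_square algebra_simps)
  then have "coprime m b"
    using coprime_if_square_cong_4 assms(1,2) by fastforce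
  have "odd m" using m assms(4,5) by auto
  have "int m dvd (int u - 1) * (int u + 1)"
    using m assms(5) by (auto simp: of_nat_diff add.commute)
  then have "int m dvd int b ^ y * (int b ^ d - 1)"
    unfolding key by simp
  moreover have "coprime (int m) (int b ^ y)"
    using \<open>coprime m b\<close> by simp
  ultimately have "int m dvd int b ^ d - 1"
    using coprime_dvd_mult_right_iff by blast
  then have "[b ^ d = 1] (mod m)"
    by (metis cong_iff_dvd_diff cong_int_iff of_nat_1 of_nat_power)
  then show False
    using not_square_cong_4_if_odd_power_cong_1 assms(1-3) \<open>odd m\<close> \<open>[m ^ 2 = 4] (mod b)\<close>
    by blast
qed

lemma two_power_plus_power_ne_four_plus_power:
  fixes b x y y' :: nat
  assumes "prime b" "b mod 8 = 5" "even x" "4 \<le> x" "even y" "0 < y" "odd y'"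
  shows "2 ^ x + b ^ y \<noteq> 4 + b ^ y'"
proof
  assume eq: "2 ^ x + b ^ y = 4 + b ^ y'"
  have "5 \<le> b" using assms(1,2) prime_ge_2_nat[of b] by presburger
  have "y < y'"
  proof (rule ccontr)
    assume "\<not> y < y'"
    then have "b ^ y' \<le> b ^ y" using \<open>5 \<le> b\<close> by (intro power_increasing) auto
    moreover have "(2::nat) ^ 4 \<le> 2 ^ x" using assms(4) by (intro power_increasing) auto
    ultimately show False using eq by simp
  qed
  define d where "d = y' - y"
  define u where "u = (2::nat) ^ (x div 2 - 1)"
  have "odd d" unfolding d_def using \<open>y < y'\<close> assms(5,7) by presburger
  have "even u" "0 < u" unfolding u_def using assms(3,4) by auto
  have "x = 2 + 2 * (x div 2 - 1)" using assms(3,4) by presburger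
  then have "(2::nat) ^ x = 2 ^ 2 * 2 ^ (2 * (x div 2 - 1))" by (metis power_add)
  then have "2 ^ x = 4 * u ^ 2" unfolding u_def by (simp only: power_even_eq) simp
  moreover have "b ^ y' = b ^ y * b ^ d" unfolding d_def using \<open>y < y'\<close> by (simp flip: power_add)
  ultimately have "4 * u ^ 2 + b ^ y = 4 + b ^ y * b ^ d" using eq by simp
  then have "int (4 * u ^ 2 + b ^ y) = int (4 + b ^ y * b ^ d)" by (rule arg_cong)
  then have "int b ^ y * (int b ^ d - 1) = 4 * ((int u - 1) * (int u + 1))"
    by (simp add: algebra_simps power2_eq_square)
  then show False
    using power_times_pred_ne_four_times_square_pred assms(1,2,6) \<open>odd d\<close> \<open>even u\<close> \<open>0 < u\<close>
    by blast
qed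

lemma exponent_eq_2_if_cong:
  fixes x B C :: nat
  assumes "2 ^ x + B = C" and "[B + 4 = C] (mod 8)"
  shows "x = 2"
proof -
  have "[2 ^ x + B = 4 + B] (mod 8)" using assms by (simp add: cong_sym add.commute)
  then have "[(2::nat) ^ x = 4] (mod 8)" by (simp only: cong_add_rcancel_nat)
  then show ?thesis
    using two_power_mod_8[of x] by (auto simp: cong_def less_Suc_eq numeral_3_eq_3 split: if_splits)
qed

lemma first_solution_exponent_eq_2:
  fixes b c x y :: nat
  assumes "odd b" "c mod 8 = 5" "even y" "2 ^ x + b ^ y = c"
  shows "x = 2"
proof -
  have "[b ^ y = 1] (mod 8)"
    using square_mod_8_eq_1_iff even_power_cong_1 assms(1,3) by blast
  then have "[b ^ y + 4 = c] (mod 8)" using assms(2) by (simp add: cong_def mod_add_left_eq[symmetric])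
  then show ?thesis using exponent_eq_2_if_cong assms(4) by blast
qed

lemma prime_eq_2_if_power_sum_odd:
  fixes a b c x y :: nat
  assumes "prime a" "odd b" "odd c" "a ^ x + b ^ y = c"
  shows "a = 2"
proof -
  have "even a" using assms(2-4) by (auto simp: even_power)
  then show ?thesis using prime_ge_2_nat[OF assms(1)] prime_odd_nat[OF assms(1)] by force
qed

lemma second_solution_exponent_eq_2:
  fixes b c x y z :: nat
  assumes "b mod 8 = 5" "odd y" "c mod 8 = 1" "2 ^ x + b ^ y = c ^ z"
  shows "x = 2"
proof -
  have "odd b" using assms(1) by presburger
  then have "[b ^ y = b] (mod 8)"
    using square_mod_8_eq_1_iff odd_power_cong_self assms(2) by blast
  moreover have "c ^ z mod 8 = 1" using assms(3) power_mod[of c 8 z] by simp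
  ultimately have "[b ^ y + 4 = c ^ z] (mod 8)"
    using assms(1) by (simp add: cong_def mod_add_left_eq[symmetric])
  then show ?thesis using exponent_eq_2_if_cong assms(4) by blast
qed

lemma odd_exponent_if_four_plus_power_eq:
  fixes b c y z :: nat
  assumes "b mod 3 = 1" "c mod 3 = 2" "4 + b ^ y = c ^ z"
  shows "odd z"
proof
  assume "even z"
  have "[c ^ 2 = 1] (mod 3)" using assms(2) by (simp add: cong_def power_mod[of c, symmetric])
  then have "[c ^ z = 1] (mod 3)" using \<open>even z\<close> by (rule even_power_cong_1)
  moreover have "b ^ y mod 3 = 1" using assms(1) power_mod[of b 3 y] by simp
  moreover have "(4 + b ^ y) mod 3 = (4 + b ^ y mod 3) mod 3" by (simp add: mod_add_right_eq)
  ultimately show False using assms(3) by (simp add: cong_def)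
qed

lemma second_solution_shape:
  fixes b c x1 y1 x2 y2 z2 :: nat
  assumes "prime b" "b mod 8 = 5" "b mod 3 = 1" "c mod 8 = 1" "c mod 3 = 2"
    and first: "2 ^ x1 + b ^ y1 = c" "even x1" "even y1" "0 < y1"
    and second: "2 ^ x2 + b ^ y2 = c ^ z2" "odd y2" "0 < z2"
  shows "x2 = 2 \<and> 4 + b ^ y2 = c ^ z2 \<and> odd y2 \<and> 1 < y2 \<and> odd z2 \<and> 1 < z2"
proof -
  have "x2 = 2" using second_solution_exponent_eq_2 assms(2,4) second(1,2) by blast
  then have four: "4 + b ^ y2 = c ^ z2" using second(1) by simp
  have "odd z2" using odd_exponent_if_four_plus_power_eq assms(3,5) four by blast
  have "odd b" using assms(2) by presburger
  have "5 \<le> b" using assms(1,2) prime_ge_2_nat[of b] by presburger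
  have "1 < y2"
  proof -
    have "b + 4 < b * b" using \<open>5 \<le> b\<close> mult_le_mono1[of 5 b b] by linarith
    also have "b * b \<le> b ^ y1"
      using first(3,4) \<open>5 \<le> b\<close> power_increasing[of 2 y1 b] by (auto simp: power2_eq_square)
    also have "b ^ y1 < c" using first(1) zero_less_power[of "2::nat" x1] by linarith
    also have "c \<le> c ^ z2" using second(3) by (cases c) (simp_all add: self_le_power)
    finally have "b ^ 1 < b ^ y2" using four by simp
    then show ?thesis using power_strict_increasing_iff[of b 1 y2] \<open>5 \<le> b\<close> by simp
  qed
  have "1 < z2"
  proof (rule ccontr)
    assume "\<not> 1 < z2"
    then have "z2 = 1" using second(3) by simp
    then have "2 ^ x1 + b ^ y1 = 4 + b ^ y2" using first(1) four by simp
    moreover have "4 \<le> x1"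
    proof -
      have "[b ^ y1 = 1] (mod 8)"
        using square_mod_8_eq_1_iff even_power_cong_1 \<open>odd b\<close> first(3) by blast
      then have "[2 ^ x1 + b ^ y1 = 0 + b ^ y1] (mod 8)"
        using first(1) assms(4) by (simp add: cong_def)
      then have "(2::nat) ^ x1 mod 8 = 0" by (simp only: cong_add_rcancel_nat) (simp add: cong_def)
      then show ?thesis using two_power_mod_8[of x1] first(2) by (auto split: if_splits)
    qed
    ultimately show False
      using two_power_plus_power_ne_four_plus_power assms(1,2) first(2-4) second(2) by blast
  qed
  show ?thesis using \<open>x2 = 2\<close> four second(2) \<open>1 < y2\<close> \<open>odd z2\<close> \<open>1 < z2\<close> by simp
qed

theorem mainTheorem10:
  fixes a b c x1 y1 z1 x2 y2 z2 :: nat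
  assumes "prime a" and "prime b" and "prime c"
    and "a \<noteq> b" and "a \<noteq> c" and "b \<noteq> c" and "a < b"
    and "N a b c > 1"
    and "(a, b, c) \<notin> {(2,3,5), (2,3,11), (2,5,3), (2,7,3), (3,5,2), (3,13,2)}"
    and "sols a b c = {(x1, y1, z1), (x2, y2, z2)}"
    and "(x1, y1, z1) \<noteq> (x2, y2, z2)"
    and "2 dvd x1" and "2 dvd y1" and "z1 = 1" and "\<not> 2 dvd y2"
    and "b mod 24 = 13"
  shows "(c mod 24 = 5 \<longrightarrow> x1 = 2) \<and>
         (c mod 24 = 17 \<longrightarrow> x2 = 2 \<and> 4 + b ^ y2 = c ^ z2 \<and> odd y2 \<and> y2 > 1 \<and> odd z2 \<and> z2 > 1)"
proof -
  have "(x1, y1, z1) \<in> sols a b c" "(x2, y2, z2) \<in> sols a b c"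
    using assms(10) by auto
  then have first: "0 < y1" "a ^ x1 + b ^ y1 = c" and second: "0 < z2" "a ^ x2 + b ^ y2 = c ^ z2"
    using assms(14) by (simp_all add: sols_def)
  have b: "b mod 8 = 5" "b mod 3 = 1"
    using assms(16) mod_mod_cancel[of 8 24 b] mod_mod_cancel[of 3 24 b] by simp_all
  then have "odd b" by presburger
  have a: "a = 2" if "odd c"
    using prime_eq_2_if_power_sum_odd assms(1) \<open>odd b\<close> that first(2) by blast
  show ?thesis
  proof (rule conjI; rule impI)
    assume "c mod 24 = 5"
    then have "c mod 8 = 5" using mod_mod_cancel[of 8 24 c] by simp
    moreover from this have "odd c" by presburger
    ultimately show "x1 = 2"
      using first_solution_exponent_eq_2 \<open>odd b\<close> assms(13) first(2) a by blast
  next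
    assume "c mod 24 = 17"
    then have c: "c mod 8 = 1" "c mod 3 = 2"
      using mod_mod_cancel[of 8 24 c] mod_mod_cancel[of 3 24 c] by simp_all
    then have "odd c" by presburger
    then show "x2 = 2 \<and> 4 + b ^ y2 = c ^ z2 \<and> odd y2 \<and> y2 > 1 \<and> odd z2 \<and> z2 > 1"
      using second_solution_shape[of b c x1 y1 x2 y2 z2] assms(2,12,13,15) b c first second a
      by simp
  qed
qed

end
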